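(* Let $\hat\pi=(\hat\pi_h)_{h=1}^H$ be any chunking policy and $\sigma>0$. Then the smoothed policy $\hat\pi_\sigma$ is $\gamma_{\mathrm{TVC}}$-TVC with $\gamma_{\mathrm{TVC}}(u)=\dfrac{u\sqrt{2\tau_o-1}}{2\sigma}$, i.e. for all $h$ and all $o,o'\in\mathcal{O}$, $\mathrm{TV}(\hat\pi_{\sigma,h}(o),\hat\pi_{\sigma,h}(o'))\le \frac{\sqrt{2\tau_o-1}}{2\sigma}\,d_{\mathrm{traj}}(o,o')$.
   Context: Let $\mathcal{O}=(\mathbb{R}^{d_x})^{\tau_o}\times(\mathbb{R}^{d_u})^{\tau_o-1}$ be the space of observation chunks $o=(x_{1:\tau_o},u_{1:\tau_o-1})$, identified with a Euclidean space, and $\mathcal{A}$ a Polish space of composite actions. A chunking policy is a sequence of probability kernels $\hat\pi_h:\mathcal{O}\to\Delta(\mathcal{A})$, $h=1,\dots,H$. The smoothed policy $\hat\pi_\sigma$ has $\hat\pi_{\sigma,h}(o)$ equal to the law of $a\sim\hat\pi_h(\tilde o)$ where $\tilde o\sim\mathcal{N}(o,\sigma^2I)$. For $o,o'\in\mathcal{O}$, $d_{\mathrm{traj}}(o,o')=\max_k\|x_k-x'_k\|\vee\max_k\|u_k-u'_k\|$ (Euclidean norms). $\mathrm{TV}$ is total variation distance. *)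

theory Defs
  imports "HOL-Probability.Probability"
begin

type_synonym ('x, 'u) obs = "(nat \<Rightarrow> 'x) \<times> (nat \<Rightarrow> 'u)"

text \<open>Observation chunks o = (x_{1..tau}, u_{1..tau-1}) with x_k in 'x = R^dx, u_k in 'u = R^du.
  The measurable space is the product of Lebesgue--Borel measures on the coordinates.\<close>
definition obs_measure :: "nat \<Rightarrow> ('x::euclidean_space, 'u::euclidean_space) obs measure" where
  "obs_measure \<tau> = (\<Pi>\<^sub>M k\<in>{1..\<tau>}. lborel) \<Otimes>\<^sub>M (\<Pi>\<^sub>M k\<in>{1..\<tau>-1}. lborel)"

definition obs_dist2 :: "nat \<Rightarrow> ('x::euclidean_space, 'u::euclidean_space) obs \<Rightarrow> ('x, 'u) obs \<Rightarrow> real" where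
  "obs_dist2 \<tau> ob ob' = (\<Sum>k\<in>{1..\<tau>}. (norm (fst ob k - fst ob' k))\<^sup>2)
                        + (\<Sum>k\<in>{1..\<tau>-1}. (norm (snd ob k - snd ob' k))\<^sup>2)"

definition obs_dim :: "nat \<Rightarrow> ('x::euclidean_space \<times> 'u::euclidean_space) itself \<Rightarrow> nat" where
  "obs_dim \<tau> _ = \<tau> * DIM('x) + (\<tau> - 1) * DIM('u)"

definition gauss_obs :: "nat \<Rightarrow> real \<Rightarrow> ('x::euclidean_space, 'u::euclidean_space) obs \<Rightarrow> ('x, 'u) obs measure" where
  "gauss_obs \<tau> \<sigma> ob = density (obs_measure \<tau>)
     (\<lambda>y. ennreal ((2 * pi * \<sigma>\<^sup>2) powr (- real (obs_dim \<tau> TYPE('x \<times> 'u)) / 2)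
                    * exp (- obs_dist2 \<tau> y ob / (2 * \<sigma>\<^sup>2))))"

definition smoothed_policy :: "nat \<Rightarrow> real \<Rightarrow> (nat \<Rightarrow> ('x::euclidean_space, 'u::euclidean_space) obs \<Rightarrow> 'a measure)
     \<Rightarrow> nat \<Rightarrow> ('x, 'u) obs \<Rightarrow> 'a measure" where
  "smoothed_policy \<tau> \<sigma> \<pi> h ob = gauss_obs \<tau> \<sigma> ob \<bind> \<pi> h"

definition tv_dist :: "'a measure \<Rightarrow> 'a measure \<Rightarrow> real" where
  "tv_dist P Q = (SUP A\<in>sets P. \<bar>measure P A - measure Q A\<bar>)"

definition d_traj :: "nat \<Rightarrow> ('x::euclidean_space, 'u::euclidean_space) obs \<Rightarrow> ('x, 'u) obs \<Rightarrow> real" where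
  "d_traj \<tau> ob ob' = Max ((\<lambda>k. norm (fst ob k - fst ob' k)) ` {1..\<tau>}
                          \<union> (\<lambda>k. norm (snd ob k - snd ob' k)) ` {1..\<tau>-1})"

end

theory Submission
  imports Defs
begin

(* The smoothed policy is the mixture of the kernel pi_h against the Gaussian density
   centred at the observation, so the probability that the two smoothed policies assign
   to an event differs by at most half the L1 distance of the two Gaussian densities.
   By Cauchy-Schwarz applied to |f - g| = |sqrt f - sqrt g| (sqrt f + sqrt g), this L1
   distance is at most 2 sqrt (1 - rho^2), where rho is the Bhattacharyya coefficient
   (the integral of sqrt (f g)).  For two Gaussians with covariance sigma^2 I and centres
   at squared distance D, sqrt (f g) is exp (-D / (8 sigma^2)) times the Gaussian centred
   at the midpoint (Apollonius' identity), so rho^2 = exp (-D / (4 sigma^2)) and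
   1 - rho^2 <= D / (4 sigma^2).  Finally D <= (2 tau - 1) d_traj^2, because an
   observation chunk consists of 2 tau - 1 vectors. *)

definition prob_density :: "'a measure \<Rightarrow> ('a \<Rightarrow> real) \<Rightarrow> bool" where
  "prob_density M f \<longleftrightarrow> integrable M f \<and> (\<forall>x\<in>space M. 0 \<le> f x) \<and> (\<integral>x. f x \<partial>M) = 1"

lemma prob_density_nn_integral:
  assumes "prob_density M f"
  shows "(\<integral>\<^sup>+x. ennreal (f x) \<partial>M) = 1"
  using assms unfolding prob_density_def by (subst nn_integral_eq_integral) auto

lemma prob_density_in_prob_algebra:
  assumes "prob_density M f"
  shows "density M (\<lambda>x. ennreal (f x)) \<in> space (prob_algebra M)"
proof -
  have "f \<in> borel_measurable M"
    using assms by (simp add: prob_density_def borel_measurable_integrable)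
  then show ?thesis
    using prob_density_nn_integral[OF assms]
    by (auto simp: space_prob_algebra emeasure_density intro!: prob_spaceI)
qed

lemma prob_densityI:
  assumes "f \<in> borel_measurable M" "\<And>x. x \<in> space M \<Longrightarrow> 0 \<le> f x"
    and "(\<integral>\<^sup>+x. ennreal (f x) \<partial>M) = 1"
  shows "prob_density M f"
proof -
  have "integrable M f"
    using assms by (intro integrableI_nn_integral_finite[where x=1]) auto
  moreover have "(\<integral>x. f x \<partial>M) = 1"
    using assms \<open>integrable M f\<close> by (subst (asm) nn_integral_eq_integral) auto
  ultimately show ?thesis
    using assms by (simp add: prob_density_def)
qed

lemma integral_Cauchy_Schwarz:
  fixes u v :: "'a \<Rightarrow> real"
  assumes [measurable]: "u \<in> borel_measurable M" "v \<in> borel_measurable M"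
    and "integrable M (\<lambda>x. (u x)\<^sup>2)" "integrable M (\<lambda>x. (v x)\<^sup>2)"
  shows "(\<integral>x. \<bar>u x * v x\<bar> \<partial>M)\<^sup>2 \<le> (\<integral>x. (u x)\<^sup>2 \<partial>M) * (\<integral>x. (v x)\<^sup>2 \<partial>M)"
proof -
  have sq: "(\<integral>\<^sup>+x. ennreal \<bar>w x\<bar> ^ 2 \<partial>M) = ennreal (\<integral>x. (w x)\<^sup>2 \<partial>M)"
    if "integrable M (\<lambda>x. (w x)\<^sup>2)" for w :: "'a \<Rightarrow> real"
    using that by (simp add: ennreal_power nn_integral_eq_integral)
  have CS: "(\<integral>\<^sup>+x. ennreal \<bar>u x * v x\<bar> \<partial>M)\<^sup>2
      \<le> ennreal ((\<integral>x. (u x)\<^sup>2 \<partial>M) * (\<integral>x. (v x)\<^sup>2 \<partial>M))"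
    using Cauchy_Schwarz_nn_integral[of "\<lambda>x. ennreal \<bar>u x\<bar>" M "\<lambda>x. ennreal \<bar>v x\<bar>"]
    by (simp add: sq assms ennreal_mult abs_mult)
  then have "(\<integral>\<^sup>+x. ennreal \<bar>u x * v x\<bar> \<partial>M)\<^sup>2 < \<top>"
    using ennreal_less_top by (rule le_less_trans)
  then have "(\<integral>\<^sup>+x. ennreal \<bar>u x * v x\<bar> \<partial>M) < \<top>"
    by (simp add: power_less_top_ennreal)
  then have "integrable M (\<lambda>x. \<bar>u x * v x\<bar>)"
    by (intro integrableI_bounded) auto
  with CS show ?thesis
    by (simp add: nn_integral_eq_integral ennreal_power integral_nonneg_AE)
qed

lemma integrable_prob_density_mult:
  assumes f: "prob_density M f"
    and [measurable]: "h \<in> borel_measurable M" and h01: "\<And>x. x \<in> space M \<Longrightarrow> h x \<in> {0..1}"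
  shows "integrable M (\<lambda>x. f x * h x)"
proof (rule Bochner_Integration.integrable_bound)
  show f_int: "integrable M f"
    using f by (simp add: prob_density_def)
  show "(\<lambda>x. f x * h x) \<in> borel_measurable M"
    using borel_measurable_integrable[OF f_int] by measurable
  show "AE x in M. norm (f x * h x) \<le> norm (f x)"
    using h01 by (auto simp: abs_mult intro!: mult_left_le)
qed

lemma kernel_measure_measurable:
  assumes K: "K \<in> M \<rightarrow>\<^sub>M prob_algebra N" and X: "X \<in> sets N"
  shows "(\<lambda>x. measure (K x) X) \<in> borel_measurable M"
    and "\<And>x. x \<in> space M \<Longrightarrow> measure (K x) X \<in> {0..1}"
  using K X measurable_space[OF K] by (auto simp: space_prob_algebra prob_space.prob_le_1)

lemma measure_bind_density:
  assumes f: "prob_density M f" and K: "K \<in> M \<rightarrow>\<^sub>M prob_algebra N" and X: "X \<in> sets N"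
  shows "measure (density M (\<lambda>x. ennreal (f x)) \<bind> K) X = (\<integral>x. f x * measure (K x) X \<partial>M)"
proof -
  have f_nonneg: "\<And>x. x \<in> space M \<Longrightarrow> 0 \<le> f x"
    using f by (simp add: prob_density_def)
  have "emeasure (density M (\<lambda>x. ennreal (f x)) \<bind> K) X
      = (\<integral>\<^sup>+x. ennreal (f x) * emeasure (K x) X \<partial>M)"
    using f by (simp add: emeasure_bind_prob_algebra[OF prob_density_in_prob_algebra[OF f] K X]
        nn_integral_density prob_density_def borel_measurable_integrable
        measurable_compose[OF measurable_prob_algebraD[OF K] measurable_emeasure_subprob_algebra[OF X]])
  also have "\<dots> = (\<integral>\<^sup>+x. ennreal (f x * measure (K x) X) \<partial>M)"
  proof (intro nn_integral_cong)
    fix x assume x: "x \<in> space M"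
    then interpret prob_space "K x"
      using measurable_space[OF K] by (simp add: space_prob_algebra)
    show "ennreal (f x) * emeasure (K x) X = ennreal (f x * measure (K x) X)"
      using f_nonneg[OF x] by (simp add: emeasure_eq_measure ennreal_mult)
  qed
  also have "\<dots> = ennreal (\<integral>x. f x * measure (K x) X \<partial>M)"
    using f_nonneg
    by (intro nn_integral_eq_integral integrable_prob_density_mult[OF f] kernel_measure_measurable[OF K X]) auto
  finally show ?thesis
    using f_nonneg by (simp add: measure_def integral_nonneg_AE)
qed

lemma integral_diff_mult_le_half_L1:
  assumes f: "prob_density M f" and g: "prob_density M g"
    and [measurable]: "h \<in> borel_measurable M" and h01: "\<And>x. x \<in> space M \<Longrightarrow> h x \<in> {0..1}"
  shows "(\<integral>x. (f x - g x) * h x \<partial>M) \<le> (\<integral>x. \<bar>f x - g x\<bar> \<partial>M) / 2"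
proof -
  have int: "integrable M f" "integrable M g" and tot: "(\<integral>x. f x - g x \<partial>M) = 0"
    using f g by (auto simp: prob_density_def)
  have "(\<integral>x. (f x - g x) * h x \<partial>M) \<le> (\<integral>x. ((f x - g x) + \<bar>f x - g x\<bar>) / 2 \<partial>M)"
  proof (rule integral_mono)
    show "integrable M (\<lambda>x. (f x - g x) * h x)"
      using integrable_prob_density_mult[OF f] integrable_prob_density_mult[OF g] h01
      by (simp add: left_diff_distrib)
    have "a * t \<le> (a + \<bar>a\<bar>) / 2" if "t \<in> {0..1}" for a t :: real
      using that mult_left_le[of t a] mult_nonpos_nonneg[of a t] by (cases "a \<le> 0") auto
    then show "(f x - g x) * h x \<le> ((f x - g x) + \<bar>f x - g x\<bar>) / 2" if "x \<in> space M" for x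
      using h01[OF that] by blast
  qed (use int in auto)
  also have "\<dots> = (\<integral>x. \<bar>f x - g x\<bar> \<partial>M) / 2"
    using int tot by simp
  finally show ?thesis .
qed

lemma abs_measure_bind_density_diff_le:
  assumes f: "prob_density M f" and g: "prob_density M g"
    and K: "K \<in> M \<rightarrow>\<^sub>M prob_algebra N" and X: "X \<in> sets N"
  shows "\<bar>measure (density M (\<lambda>x. ennreal (f x)) \<bind> K) X - measure (density M (\<lambda>x. ennreal (g x)) \<bind> K) X\<bar>
    \<le> (\<integral>x. \<bar>f x - g x\<bar> \<partial>M) / 2"
proof -
  note KX = kernel_measure_measurable[OF K X]
  have diff: "measure (density M (\<lambda>x. ennreal (p x)) \<bind> K) X - measure (density M (\<lambda>x. ennreal (q x)) \<bind> K) X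
      = (\<integral>x. (p x - q x) * measure (K x) X \<partial>M)" if p: "prob_density M p" and q: "prob_density M q" for p q
    using integrable_prob_density_mult[OF p KX] integrable_prob_density_mult[OF q KX]
    by (simp add: measure_bind_density[OF p K X] measure_bind_density[OF q K X] left_diff_distrib)
  have "(\<integral>x. \<bar>g x - f x\<bar> \<partial>M) = (\<integral>x. \<bar>f x - g x\<bar> \<partial>M)"
    by (simp add: abs_minus_commute)
  then show ?thesis
    using integral_diff_mult_le_half_L1[OF f g KX] integral_diff_mult_le_half_L1[OF g f KX]
      diff[OF f g] diff[OF g f] by linarith
qed

lemma integral_abs_diff_le_Bhattacharyya:
  assumes f: "prob_density M f" and g: "prob_density M g"
  shows "(\<integral>x. \<bar>f x - g x\<bar> \<partial>M) \<le> 2 * sqrt (1 - (\<integral>x. sqrt (f x * g x) \<partial>M)\<^sup>2)"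
proof -
  define \<rho> where "\<rho> = (\<integral>x. sqrt (f x * g x) \<partial>M)"
  have f_int: "integrable M f" and g_int: "integrable M g"
    and nonneg: "\<And>x. x \<in> space M \<Longrightarrow> 0 \<le> f x \<and> 0 \<le> g x"
    and tot: "(\<integral>x. f x \<partial>M) = 1" "(\<integral>x. g x \<partial>M) = 1"
    using f g by (auto simp: prob_density_def)
  note [measurable] = borel_measurable_integrable[OF f_int] borel_measurable_integrable[OF g_int]
  have fg_int: "integrable M (\<lambda>x. sqrt (f x * g x))"
  proof (rule Bochner_Integration.integrable_bound[where f="\<lambda>x. f x + g x"])
    show "AE x in M. norm (sqrt (f x * g x)) \<le> norm (f x + g x)"
      using nonneg arith_geo_mean_sqrt by fastforce
  qed (use f_int g_int in auto)
  have sq: "(sqrt (f x) - sqrt (g x))\<^sup>2 = f x + g x - 2 * sqrt (f x * g x)"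
    "(sqrt (f x) + sqrt (g x))\<^sup>2 = f x + g x + 2 * sqrt (f x * g x)" if "x \<in> space M" for x
    using nonneg[OF that] by (simp_all add: power2_diff power2_sum real_sqrt_mult)
  have sq_int: "integrable M (\<lambda>x. (sqrt (f x) - sqrt (g x))\<^sup>2)" "integrable M (\<lambda>x. (sqrt (f x) + sqrt (g x))\<^sup>2)"
    using f_int g_int fg_int by (simp_all add: Bochner_Integration.integrable_cong[OF refl sq(1)]
      Bochner_Integration.integrable_cong[OF refl sq(2)])
  have minus: "(\<integral>x. (sqrt (f x) - sqrt (g x))\<^sup>2 \<partial>M) = 2 - 2 * \<rho>"
    and plus: "(\<integral>x. (sqrt (f x) + sqrt (g x))\<^sup>2 \<partial>M) = 2 + 2 * \<rho>"
    using f_int g_int fg_int tot by (simp_all add: Bochner_Integration.integral_cong[OF refl sq(1)]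
      Bochner_Integration.integral_cong[OF refl sq(2)] \<rho>_def)
  have factor: "(\<integral>x. \<bar>(sqrt (f x) - sqrt (g x)) * (sqrt (f x) + sqrt (g x))\<bar> \<partial>M) = (\<integral>x. \<bar>f x - g x\<bar> \<partial>M)"
    using nonneg by (intro Bochner_Integration.integral_cong) (auto simp: algebra_simps)
  have "(\<integral>x. \<bar>f x - g x\<bar> \<partial>M)\<^sup>2 \<le> (2 - 2 * \<rho>) * (2 + 2 * \<rho>)"
    using integral_Cauchy_Schwarz[OF _ _ sq_int] unfolding factor minus plus by simp
  also have "\<dots> = 4 * (1 - \<rho>\<^sup>2)"
    by (simp add: algebra_simps power2_eq_square)
  finally have "(\<integral>x. \<bar>f x - g x\<bar> \<partial>M)\<^sup>2 \<le> 4 * (1 - \<rho>\<^sup>2)" .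
  then have "(\<integral>x. \<bar>f x - g x\<bar> \<partial>M) \<le> sqrt (4 * (1 - \<rho>\<^sup>2))"
    by (rule real_le_rsqrt)
  then show ?thesis
    unfolding real_sqrt_mult real_sqrt_four \<rho>_def .
qed

lemma nn_integral_gaussian_kernel_real:
  fixes \<sigma> a :: real
  assumes "\<sigma> > 0"
  shows "(\<integral>\<^sup>+x. ennreal (exp (- (x - a)\<^sup>2 / (2 * \<sigma>\<^sup>2))) \<partial>lborel) = ennreal (sqrt (2 * pi * \<sigma>\<^sup>2))"
proof -
  have "(\<integral>\<^sup>+x. ennreal (exp (- (x - a)\<^sup>2 / (2 * \<sigma>\<^sup>2))) \<partial>lborel)
      = (\<integral>\<^sup>+x. ennreal (sqrt (2 * pi * \<sigma>\<^sup>2)) * ennreal (normal_density a \<sigma> x) \<partial>lborel)"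
    using assms by (intro nn_integral_cong) (simp add: normal_density_def ennreal_mult[symmetric])
  also have "\<dots> = ennreal (sqrt (2 * pi * \<sigma>\<^sup>2)) * (\<integral>\<^sup>+x. ennreal (normal_density a \<sigma> x) \<partial>lborel)"
    by (rule nn_integral_cmult) simp
  also have "(\<integral>\<^sup>+x. ennreal (normal_density a \<sigma> x) \<partial>lborel) = 1"
    using assms by (subst nn_integral_eq_integral) auto
  finally show ?thesis by simp
qed

lemma power2_norm_eq_sum_Basis: "(norm (x::'a::euclidean_space))\<^sup>2 = (\<Sum>b\<in>Basis. (x \<bullet> b)\<^sup>2)"
  unfolding power2_norm_eq_inner by (subst euclidean_inner) (simp add: power2_eq_square)

lemma nn_integral_gaussian_kernel_euclidean:
  fixes c :: "'a::euclidean_space"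
  assumes "\<sigma> > 0"
  shows "(\<integral>\<^sup>+x. ennreal (exp (- (norm (x - c))\<^sup>2 / (2 * \<sigma>\<^sup>2))) \<partial>lborel)
    = ennreal (sqrt (2 * pi * \<sigma>\<^sup>2) ^ DIM('a))"
proof -
  have "(\<integral>\<^sup>+x. ennreal (exp (- (norm (x - c))\<^sup>2 / (2 * \<sigma>\<^sup>2))) \<partial>lborel)
      = (\<integral>\<^sup>+x. (\<Prod>b\<in>Basis. (\<lambda>b t. ennreal (exp (- (t - c \<bullet> b)\<^sup>2 / (2 * \<sigma>\<^sup>2)))) b (x \<bullet> b)) \<partial>lborel)"
    by (intro nn_integral_cong)
      (simp add: power2_norm_eq_sum_Basis inner_diff_left sum_divide_distrib sum_negf[symmetric]
        exp_sum prod_ennreal)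
  also have "\<dots> = (\<Prod>b\<in>(Basis::'a set). ennreal (sqrt (2 * pi * \<sigma>\<^sup>2)))"
    by (subst nn_integral_lborel_prod) (auto simp: nn_integral_gaussian_kernel_real[OF assms, simplified])
  finally show ?thesis
    by (simp add: prod_ennreal ennreal_power)
qed

lemma nn_integral_gaussian_kernel_PiM:
  fixes c :: "'i \<Rightarrow> 'a::euclidean_space"
  assumes "\<sigma> > 0" and "finite I"
  shows "(\<integral>\<^sup>+y. ennreal (exp (- (\<Sum>k\<in>I. (norm (y k - c k))\<^sup>2) / (2 * \<sigma>\<^sup>2))) \<partial>(\<Pi>\<^sub>M k\<in>I. lborel))
    = ennreal (sqrt (2 * pi * \<sigma>\<^sup>2) ^ (card I * DIM('a)))"
proof -
  interpret product_sigma_finite "\<lambda>_. lborel :: 'a measure" by standard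
  have "(\<integral>\<^sup>+y. ennreal (exp (- (\<Sum>k\<in>I. (norm (y k - c k))\<^sup>2) / (2 * \<sigma>\<^sup>2))) \<partial>(\<Pi>\<^sub>M k\<in>I. lborel))
      = (\<integral>\<^sup>+y. (\<Prod>k\<in>I. (\<lambda>k x. ennreal (exp (- (norm (x - c k))\<^sup>2 / (2 * \<sigma>\<^sup>2)))) k (y k)) \<partial>(\<Pi>\<^sub>M k\<in>I. lborel))"
    using \<open>finite I\<close>
    by (intro nn_integral_cong) (simp add: sum_divide_distrib sum_negf[symmetric] exp_sum prod_ennreal)
  also have "\<dots> = (\<Prod>k\<in>I. ennreal (sqrt (2 * pi * \<sigma>\<^sup>2) ^ DIM('a)))"
    by (subst product_nn_integral_prod) (auto simp: assms nn_integral_gaussian_kernel_euclidean[OF assms(1), simplified])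
  finally show ?thesis
    using assms by (simp add: prod_ennreal ennreal_power[symmetric] power_mult[symmetric] mult.commute)
qed

lemma nn_integral_pair_measure_mult:
  fixes f :: "'a \<Rightarrow> ennreal" and g :: "'b \<Rightarrow> ennreal"
  assumes "sigma_finite_measure N" "f \<in> borel_measurable M" "g \<in> borel_measurable N"
  shows "(\<integral>\<^sup>+z. f (fst z) * g (snd z) \<partial>(M \<Otimes>\<^sub>M N)) = (\<integral>\<^sup>+x. f x \<partial>M) * (\<integral>\<^sup>+y. g y \<partial>N)"
proof -
  interpret N: sigma_finite_measure N by fact
  have "(\<integral>\<^sup>+z. f (fst z) * g (snd z) \<partial>(M \<Otimes>\<^sub>M N)) = (\<integral>\<^sup>+x. \<integral>\<^sup>+y. f x * g y \<partial>N \<partial>M)"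
    using assms by (subst N.nn_integral_fst[symmetric]) auto
  also have "\<dots> = (\<integral>\<^sup>+x. f x * (\<integral>\<^sup>+y. g y \<partial>N) \<partial>M)"
    using assms by (intro nn_integral_cong nn_integral_cmult) auto
  also have "\<dots> = (\<integral>\<^sup>+x. f x \<partial>M) * (\<integral>\<^sup>+y. g y \<partial>N)"
    using assms by (intro nn_integral_multc) auto
  finally show ?thesis .
qed

definition gauss_obs_density :: "nat \<Rightarrow> real \<Rightarrow> ('x::euclidean_space, 'u::euclidean_space) obs \<Rightarrow> ('x, 'u) obs \<Rightarrow> real" where
  "gauss_obs_density \<tau> \<sigma> c y = (2 * pi * \<sigma>\<^sup>2) powr (- real (obs_dim \<tau> TYPE('x \<times> 'u)) / 2)
    * exp (- obs_dist2 \<tau> y c / (2 * \<sigma>\<^sup>2))"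

lemma gauss_obs_eq_density:
  "gauss_obs \<tau> \<sigma> c = density (obs_measure \<tau>) (\<lambda>y. ennreal (gauss_obs_density \<tau> \<sigma> c y))"
  unfolding gauss_obs_def gauss_obs_density_def ..

lemma gauss_obs_density_nonneg: "0 \<le> gauss_obs_density \<tau> \<sigma> c y"
  unfolding gauss_obs_density_def by simp

lemma prob_density_gauss_obs_density:
  fixes c :: "('x::euclidean_space, 'u::euclidean_space) obs"
  assumes "\<sigma> > 0"
  shows "prob_density (obs_measure \<tau>) (gauss_obs_density \<tau> \<sigma> c)"
proof (rule prob_densityI)
  show "gauss_obs_density \<tau> \<sigma> c \<in> borel_measurable (obs_measure \<tau>)"
    unfolding gauss_obs_density_def obs_dist2_def obs_measure_def by measurable
  define G where "G = 2 * pi * \<sigma>\<^sup>2"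
  have G: "G > 0" using assms by (simp add: G_def)
  define C where "C = G powr (- real (obs_dim \<tau> TYPE('x \<times> 'u)) / 2)"
  define f where "f = (\<lambda>x::nat\<Rightarrow>'x. ennreal (exp (- (\<Sum>k\<in>{1..\<tau>}. (norm (x k - fst c k))\<^sup>2) / (2 * \<sigma>\<^sup>2))))"
  define g where "g = (\<lambda>x::nat\<Rightarrow>'u. ennreal (exp (- (\<Sum>k\<in>{1..\<tau>-1}. (norm (x k - snd c k))\<^sup>2) / (2 * \<sigma>\<^sup>2))))"
  have [measurable]: "f \<in> borel_measurable (\<Pi>\<^sub>M k\<in>{1..\<tau>}. lborel)" "g \<in> borel_measurable (\<Pi>\<^sub>M k\<in>{1..\<tau>-1}. lborel)"
    unfolding f_def g_def by measurable
  have sf: "sigma_finite_measure (\<Pi>\<^sub>M k\<in>{1..\<tau>-1}. (lborel::'u measure))"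
  proof -
    interpret product_sigma_finite "\<lambda>_. lborel :: 'u measure" by standard
    show ?thesis by (rule sigma_finite) simp
  qed
  have exp_split: "exp (- (A + B) / s) = exp (- A / s) * exp (- B / s)" for A B s :: real
    by (simp add: exp_add[symmetric] diff_divide_distrib)
  have "(\<integral>\<^sup>+y. ennreal (gauss_obs_density \<tau> \<sigma> c y) \<partial>obs_measure \<tau>)
      = (\<integral>\<^sup>+y. ennreal C * (f (fst y) * g (snd y)) \<partial>obs_measure \<tau>)"
    unfolding gauss_obs_density_def obs_dist2_def exp_split f_def g_def C_def G_def
    by (simp add: ennreal_mult)
  also have "\<dots> = ennreal C * (\<integral>\<^sup>+y. f (fst y) * g (snd y) \<partial>obs_measure \<tau>)"
    unfolding obs_measure_def by (rule nn_integral_cmult) measurable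
  also have "(\<integral>\<^sup>+y. f (fst y) * g (snd y) \<partial>obs_measure \<tau>)
      = (\<integral>\<^sup>+x. f x \<partial>(\<Pi>\<^sub>M k\<in>{1..\<tau>}. lborel)) * (\<integral>\<^sup>+y. g y \<partial>(\<Pi>\<^sub>M k\<in>{1..\<tau>-1}. lborel))"
    unfolding obs_measure_def by (rule nn_integral_pair_measure_mult[OF sf]) measurable
  also have "\<dots> = ennreal (sqrt G ^ (\<tau> * DIM('x))) * ennreal (sqrt G ^ ((\<tau> - 1) * DIM('u)))"
    unfolding f_def g_def G_def
    using nn_integral_gaussian_kernel_PiM[OF assms finite_atLeastAtMost, where c="fst c"]
      nn_integral_gaussian_kernel_PiM[OF assms finite_atLeastAtMost, where c="snd c"]
    by simp
  also have "ennreal C * \<dots> = ennreal (C * (sqrt G ^ (\<tau> * DIM('x)) * sqrt G ^ ((\<tau> - 1) * DIM('u))))"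
    using G by (simp add: ennreal_mult C_def)
  also have "C * (sqrt G ^ (\<tau> * DIM('x)) * sqrt G ^ ((\<tau> - 1) * DIM('u))) = 1"
    using G unfolding C_def obs_dim_def
    by (simp add: sqrt_def root_powr_inverse powr_realpow[symmetric] powr_powr powr_add[symmetric]
        add_divide_distrib diff_divide_distrib)
  finally show "(\<integral>\<^sup>+y. ennreal (gauss_obs_density \<tau> \<sigma> c y) \<partial>obs_measure \<tau>) = 1"
    by simp
qed (simp add: gauss_obs_density_nonneg)

lemma Apollonius_norm:
  fixes y a b :: "'a::real_inner"
  shows "(norm (y - a))\<^sup>2 + (norm (y - b))\<^sup>2 = 2 * (norm (y - midpoint a b))\<^sup>2 + (norm (a - b))\<^sup>2 / 2"
  unfolding power2_norm_eq_inner midpoint_def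
  by (simp add: inner_commute algebra_simps)
     (simp add: field_simps)

lemma sum_Apollonius_norm:
  fixes z a b :: "'i \<Rightarrow> 'a::real_inner"
  shows "(\<Sum>k\<in>A. (norm (z k - a k))\<^sup>2) + (\<Sum>k\<in>A. (norm (z k - b k))\<^sup>2)
    = 2 * (\<Sum>k\<in>A. (norm (z k - midpoint (a k) (b k)))\<^sup>2) + (\<Sum>k\<in>A. (norm (a k - b k))\<^sup>2) / 2"
  by (simp only: sum.distrib[symmetric] sum_distrib_left sum_divide_distrib Apollonius_norm)

definition obs_midpoint :: "('x::euclidean_space, 'u::euclidean_space) obs \<Rightarrow> ('x, 'u) obs \<Rightarrow> ('x, 'u) obs" where
  "obs_midpoint c c' = ((\<lambda>k. midpoint (fst c k) (fst c' k)), (\<lambda>k. midpoint (snd c k) (snd c' k)))"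

lemma obs_dist2_Apollonius:
  "obs_dist2 \<tau> y c + obs_dist2 \<tau> y c' = 2 * obs_dist2 \<tau> y (obs_midpoint c c') + obs_dist2 \<tau> c c' / 2"
  unfolding obs_dist2_def obs_midpoint_def fst_conv snd_conv
  using sum_Apollonius_norm[of "fst y" "fst c" "{1..\<tau>}" "fst c'"]
    sum_Apollonius_norm[of "snd y" "snd c" "{1..\<tau>-1}" "snd c'"]
  by argo

lemma sqrt_gauss_obs_density_mult:
  assumes "\<sigma> > 0"
  shows "sqrt (gauss_obs_density \<tau> \<sigma> c y * gauss_obs_density \<tau> \<sigma> c' y)
    = exp (- obs_dist2 \<tau> c c' / (8 * \<sigma>\<^sup>2)) * gauss_obs_density \<tau> \<sigma> (obs_midpoint c c') y"
proof -
  have "exp (- obs_dist2 \<tau> y c / (2 * \<sigma>\<^sup>2)) * exp (- obs_dist2 \<tau> y c' / (2 * \<sigma>\<^sup>2))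
      = exp (2 * (- obs_dist2 \<tau> c c' / (8 * \<sigma>\<^sup>2) - obs_dist2 \<tau> y (obs_midpoint c c') / (2 * \<sigma>\<^sup>2)))"
    unfolding exp_add[symmetric] obs_dist2_Apollonius[of \<tau> y c c', THEN eq_diff_eq[THEN iffD2]]
    using assms by (intro arg_cong[where f=exp]) (simp add: field_simps)
  then have "gauss_obs_density \<tau> \<sigma> c y * gauss_obs_density \<tau> \<sigma> c' y
      = (exp (- obs_dist2 \<tau> c c' / (8 * \<sigma>\<^sup>2)) * gauss_obs_density \<tau> \<sigma> (obs_midpoint c c') y)\<^sup>2"
    unfolding gauss_obs_density_def
    by (simp add: power2_eq_square exp_add[symmetric] algebra_simps)
  then show ?thesis
    by (simp add: gauss_obs_density_nonneg)
qed

lemma integral_sqrt_gauss_obs_density_mult: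
  assumes "\<sigma> > 0"
  shows "(\<integral>y. sqrt (gauss_obs_density \<tau> \<sigma> c y * gauss_obs_density \<tau> \<sigma> c' y) \<partial>obs_measure \<tau>)
    = exp (- obs_dist2 \<tau> c c' / (8 * \<sigma>\<^sup>2))"
  using prob_density_gauss_obs_density[OF assms, of \<tau> "obs_midpoint c c'"]
  by (simp add: sqrt_gauss_obs_density_mult[OF assms] prob_density_def)

lemma integral_abs_gauss_obs_density_diff_le:
  assumes "\<sigma> > 0"
  shows "(\<integral>y. \<bar>gauss_obs_density \<tau> \<sigma> c y - gauss_obs_density \<tau> \<sigma> c' y\<bar> \<partial>obs_measure \<tau>) / 2
    \<le> sqrt (obs_dist2 \<tau> c c') / (2 * \<sigma>)"
proof -
  define D where "D = obs_dist2 \<tau> c c'"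
  have "D \<ge> 0"
    unfolding D_def obs_dist2_def by (intro add_nonneg_nonneg sum_nonneg) auto
  have "(\<integral>y. \<bar>gauss_obs_density \<tau> \<sigma> c y - gauss_obs_density \<tau> \<sigma> c' y\<bar> \<partial>obs_measure \<tau>) / 2
      \<le> sqrt (1 - (exp (- D / (8 * \<sigma>\<^sup>2)))\<^sup>2)"
    using integral_abs_diff_le_Bhattacharyya[OF prob_density_gauss_obs_density[OF assms, of \<tau> c]
        prob_density_gauss_obs_density[OF assms, of \<tau> c']]
    by (simp add: integral_sqrt_gauss_obs_density_mult[OF assms] D_def)
  also have "(exp (- D / (8 * \<sigma>\<^sup>2)))\<^sup>2 = exp (- (D / (4 * \<sigma>\<^sup>2)))"
    by (simp add: exp_double[symmetric])
  also have "1 - exp (- (D / (4 * \<sigma>\<^sup>2))) \<le> D / (4 * \<sigma>\<^sup>2)"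
    using exp_ge_add_one_self[of "- (D / (4 * \<sigma>\<^sup>2))"] by linarith
  also have "sqrt (D / (4 * \<sigma>\<^sup>2)) = sqrt D / (2 * \<sigma>)"
    using assms by (simp add: real_sqrt_divide real_sqrt_mult)
  finally show ?thesis
    unfolding D_def by (simp add: real_sqrt_le_mono)
qed

lemma norm_fst_le_d_traj: "k \<in> {1..\<tau>} \<Longrightarrow> norm (fst c k - fst c' k) \<le> d_traj \<tau> c c'"
  unfolding d_traj_def by (intro Max_ge) auto

lemma norm_snd_le_d_traj: "k \<in> {1..\<tau>-1} \<Longrightarrow> norm (snd c k - snd c' k) \<le> d_traj \<tau> c c'"
  unfolding d_traj_def by (intro Max_ge) auto

lemma sqrt_obs_dist2_le_d_traj:
  assumes "1 \<le> \<tau>"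
  shows "sqrt (obs_dist2 \<tau> c c') \<le> sqrt (2 * real \<tau> - 1) * d_traj \<tau> c c'"
proof -
  let ?d = "d_traj \<tau> c c'"
  have "norm (fst c 1 - fst c' 1) \<le> ?d"
    using assms by (intro norm_fst_le_d_traj) simp
  then have "0 \<le> ?d"
    by (rule order_trans[OF norm_ge_zero])
  have "(\<Sum>k\<in>{1..\<tau>}. (norm (fst c k - fst c' k))\<^sup>2) \<le> real (card {1..\<tau>}) * ?d\<^sup>2"
    by (rule sum_bounded_above) (auto intro!: power_mono norm_fst_le_d_traj)
  moreover have "(\<Sum>k\<in>{1..\<tau>-1}. (norm (snd c k - snd c' k))\<^sup>2) \<le> real (card {1..\<tau>-1}) * ?d\<^sup>2"
    by (rule sum_bounded_above) (auto intro!: power_mono norm_snd_le_d_traj)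
  ultimately have "obs_dist2 \<tau> c c' \<le> (2 * real \<tau> - 1) * ?d\<^sup>2"
    using assms by (simp add: obs_dist2_def algebra_simps)
  then have "sqrt (obs_dist2 \<tau> c c') \<le> sqrt ((2 * real \<tau> - 1) * ?d\<^sup>2)"
    by (rule real_sqrt_le_mono)
  also have "\<dots> = sqrt (2 * real \<tau> - 1) * ?d"
    using \<open>0 \<le> ?d\<close> by (simp add: real_sqrt_mult)
  finally show ?thesis .
qed

theorem lemma1:
  fixes \<pi> :: "nat \<Rightarrow> ('x::euclidean_space, 'u::euclidean_space) obs \<Rightarrow> 'a::polish_space measure"
    and \<tau> H h :: nat and \<sigma> :: real and ob ob' :: "('x, 'u) obs"
  assumes "1 \<le> \<tau>" and "\<sigma> > 0"
    and "\<And>h'. h' \<in> {1..H} \<Longrightarrow> \<pi> h' \<in> obs_measure \<tau> \<rightarrow>\<^sub>M prob_algebra (borel :: 'a measure)"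
    and "h \<in> {1..H}"
    and "ob \<in> space (obs_measure \<tau>)" and "ob' \<in> space (obs_measure \<tau>)"
  shows "tv_dist (smoothed_policy \<tau> \<sigma> \<pi> h ob) (smoothed_policy \<tau> \<sigma> \<pi> h ob')
           \<le> sqrt (2 * real \<tau> - 1) / (2 * \<sigma>) * d_traj \<tau> ob ob'"
proof -
  have K: "\<pi> h \<in> obs_measure \<tau> \<rightarrow>\<^sub>M prob_algebra borel"
    using assms(3,4) .
  note dens = prob_density_gauss_obs_density[OF \<open>\<sigma> > 0\<close>]
  have event_le: "\<bar>measure (smoothed_policy \<tau> \<sigma> \<pi> h ob) X - measure (smoothed_policy \<tau> \<sigma> \<pi> h ob') X\<bar>
      \<le> sqrt (2 * real \<tau> - 1) / (2 * \<sigma>) * d_traj \<tau> ob ob'" if "X \<in> sets borel" for X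
  proof -
    have "\<bar>measure (smoothed_policy \<tau> \<sigma> \<pi> h ob) X - measure (smoothed_policy \<tau> \<sigma> \<pi> h ob') X\<bar>
        \<le> (\<integral>y. \<bar>gauss_obs_density \<tau> \<sigma> ob y - gauss_obs_density \<tau> \<sigma> ob' y\<bar> \<partial>obs_measure \<tau>) / 2"
      unfolding smoothed_policy_def gauss_obs_eq_density
      by (rule abs_measure_bind_density_diff_le[OF dens dens K that])
    also have "\<dots> \<le> sqrt (obs_dist2 \<tau> ob ob') / (2 * \<sigma>)"
      by (rule integral_abs_gauss_obs_density_diff_le[OF \<open>\<sigma> > 0\<close>])
    also have "\<dots> \<le> sqrt (2 * real \<tau> - 1) / (2 * \<sigma>) * d_traj \<tau> ob ob'"
      using sqrt_obs_dist2_le_d_traj[OF \<open>1 \<le> \<tau>\<close>, of ob ob'] \<open>\<sigma> > 0\<close> by (simp add: divide_right_mono)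
    finally show ?thesis .
  qed
  have "sets (smoothed_policy \<tau> \<sigma> \<pi> h ob) = sets borel"
    unfolding smoothed_policy_def gauss_obs_eq_density
    by (rule sets_bind'[OF prob_density_in_prob_algebra[OF dens] K])
  then show ?thesis
    unfolding tv_dist_def using event_le sets.empty_sets by (intro cSUP_least) blast+
qed

end
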